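(* For every positive integer $n \neq 7$, we have $N_n(\frac{1}{4}) = \lceil \frac{n}{7} \rceil$; moreover, $1 \le N_7(\frac{1}{4}) \le 2$.
   Context: For a positive integer $n$, let $\mathcal{P}_n$ denote the family of all sets of $n$ points in the Euclidean plane such that the distance between any two points of the set is at most $1$. For $0 < r \le 1$, let $N_n(r)$ be the largest integer $k$ such that for every $P \in \mathcal{P}_n$ there exists a circle of radius $r$ (i.e. a closed disc of radius $r$) which covers (contains) at least $k$ points of $P$. *)

theory Defs
  imports "HOL-Analysis.Analysis"
begin

definition point_family :: "nat \<Rightarrow> (real^2) set set" where
  "point_family n = {P. finite P \<and> card P = n \<and> (\<forall>x\<in>P. \<forall>y\<in>P. dist x y \<le> 1)}"

definition N_cover :: "nat \<Rightarrow> real \<Rightarrow> nat" where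
  "N_cover n r = (GREATEST k. \<forall>P\<in>point_family n. \<exists>c. k \<le> card (P \<inter> cball c r))"

end

theory Submission
  imports Defs
begin

text \<open>
  Lower bound: for every direction a set of diameter at most 1 lies in a strip of width at
  most 1. By the intermediate value theorem there is a direction \<theta> for which the midlines
  of the strips in the directions \<theta>, \<theta> + pi/3, \<theta> + 2 pi/3 meet in one point c. The set then
  lies in a hexagon around c with opposite sides at distance at most 1, which is covered by
  the disc of radius 1/4 about c and six discs about the points c + (dir \<phi> + dir (\<phi> + pi/3))/4,
  \<phi> = \<theta> + j pi/3. By pigeonhole one of the seven discs contains ceil(n/7) of the n points.

  Upper bound: put 6m points at the angles j pi/(3m) on a circle of radius about 1/2 and m
  points on a tiny segment through the centre. A disc of radius 1/4 contains only ring points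
  fewer than m steps apart, hence at most m of them; if it reaches the centre it contains at
  most one ring point; and if it contains a ring point it misses an end of the segment. So no
  disc contains more than m of the 7m points; for n \<le> 6 the six ring points with m = 1 do.
\<close>

definition dir :: "real \<Rightarrow> real^2" where
  "dir \<phi> = vector [cos \<phi>, sin \<phi>]"

lemma inner_dir: "inner p (dir \<phi>) = p$1 * cos \<phi> + p$2 * sin \<phi>"
  by (simp add: dir_def inner_vec_def sum_2)

lemma norm_vec2_sq: "(norm (x::real^2))^2 = (x$1)^2 + (x$2)^2"
  by (simp add: norm_vec_def L2_set_def sum_2)

lemma dist_vec2_sq: "(dist (x::real^2) y)^2 = (x$1 - y$1)^2 + (x$2 - y$2)^2"
  by (simp add: dist_norm norm_vec2_sq)

lemma norm_dir [simp]: "norm (dir \<phi>) = 1"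
  unfolding norm_eq_1 inner_dir by (simp add: dir_def flip: power2_eq_square)

lemma inner_dir_dir: "inner (dir \<alpha>) (dir \<beta>) = cos (\<alpha> - \<beta>)"
  unfolding inner_dir by (simp add: dir_def cos_diff)

lemma inner_dir_self [simp]: "inner (dir \<phi>) (dir \<phi>) = 1"
  by (simp add: inner_dir_dir)

lemma dir_add_pi: "dir (\<phi> + pi) = - dir \<phi>"
  by (simp add: dir_def vec_eq_iff forall_2 cos_add sin_add)

lemma dir_add_two_thirds_pi: "dir (\<phi> + 2*pi/3) = dir (\<phi> + pi/3) - dir \<phi>"
proof -
  have "\<phi> + 2*pi/3 = (\<phi> + pi/3) + pi/3" by simp
  then show ?thesis
    unfolding dir_def by (simp only: cos_add sin_add)
      (simp add: vec_eq_iff forall_2 cos_60 sin_60 algebra_simps)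
qed

lemma inner_dir_le_dist: "inner (p - q) (dir \<phi>) \<le> dist p q"
  using norm_cauchy_schwarz[of "p - q" "dir \<phi>"] by (simp add: dist_norm)

lemma norm_sq_eq_hex_form:
  fixes y :: "real^2"
  shows "(norm y)^2 = 4/3 * ((inner y (dir \<phi>))^2 - inner y (dir \<phi>) * inner y (dir (\<phi> + pi/3))
                            + (inner y (dir (\<phi> + pi/3)))^2)"
proof -
  define X where "X = inner y (dir \<phi>)"
  define V where "V = inner y (dir (\<phi> + pi/2))"
  have Y: "inner y (dir (\<phi> + pi/3)) = X/2 + sqrt 3/2 * V"
    by (simp add: X_def V_def inner_dir cos_add sin_add cos_60 sin_60 algebra_simps)
  have "X^2 + V^2 = ((y$1)^2 + (y$2)^2) * ((sin \<phi>)^2 + (cos \<phi>)^2)"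
    by (simp add: X_def V_def inner_dir cos_add sin_add power2_eq_square algebra_simps
        del: sin_cos_squared_add sin_cos_squared_add2 sin_cos_squared_add3)
  then have XV: "X^2 + V^2 = (norm y)^2"
    by (simp add: norm_vec2_sq)
  have "X^2 - X * (X/2 + sqrt 3/2 * V) + (X/2 + sqrt 3/2 * V)^2 = 3/4 * (X^2 + V^2)"
    by (simp add: power2_eq_square algebra_simps)
  then show ?thesis
    unfolding Y X_def[symmetric] XV by simp
qed

definition outer_centre :: "real \<Rightarrow> real^2" where
  "outer_centre \<phi> = (1/4) *\<^sub>R (dir \<phi> + dir (\<phi> + pi/3))"

lemma norm_diff_outer_centre_sq:
  "(norm (y - outer_centre \<phi>))^2
     = (norm y)^2 - (inner y (dir \<phi>) + inner y (dir (\<phi> + pi/3)))/2 + 3/16"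
proof -
  have uv: "inner (dir \<phi>) (dir (\<phi> + pi/3)) = 1/2"
    by (simp add: inner_dir_dir cos_60)
  show ?thesis
    unfolding outer_centre_def power2_norm_eq_inner
    by (simp add: inner_commute uv[unfolded inner_commute[of "dir \<phi>"]] uv algebra_simps)
qed

lemma oblique_sector_covered:
  fixes a b :: real
  assumes "0 \<le> a" "0 \<le> b" "a + b/2 \<le> 2" "b + a/2 \<le> 2"
  shows "a^2 + a*b + b^2 \<le> 1 \<or> (a - 1)^2 + (a - 1)*(b - 1) + (b - 1)^2 \<le> 1"
proof (cases "a^2 + a*b + b^2 \<le> 1")
  case False
  have ab: "0 \<le> a*b" using assms by simp
  have "1 < a + b"
  proof (rule ccontr)
    assume "\<not> 1 < a + b"
    then have "(a + b)^2 \<le> 1" using assms by (simp add: power_le_one)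
    then show False using False ab by (simp add: power2_eq_square algebra_simps)
  qed
  moreover have "0 \<le> (2 - a - b/2) * (2 - b - a/2)" using assms by simp
  ultimately consider "(a + b - 1) * (a + b - 2) \<le> 0" | "(a + b - 2) * (a + b - 3) \<le> 0"
    using assms by (cases "a + b \<le> 2") (simp_all add: mult_nonneg_nonpos mult_nonpos_nonneg)
  then show ?thesis
    using ab \<open>0 \<le> (2 - a - b/2) * (2 - b - a/2)\<close>
    by cases (simp_all add: power2_eq_square algebra_simps)
qed simp

lemma hex_sector_covered:
  fixes A B :: real
  assumes "A \<le> 1/2" "B \<le> 1/2" "B \<le> 2*A" "A \<le> 2*B"
  defines "N \<equiv> 4/3 * (A^2 - A*B + B^2)"
  shows "N \<le> 1/16 \<or> N - (A + B)/2 + 3/16 \<le> 1/16"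
proof -
  \<comment> \<open>If A, B are the projections of y onto u = dir \<phi>, v = dir (\<phi> + pi/3), then 4 y = a u + b v
    and the outer centre (u + v)/4 has coordinates (1, 1).\<close>
  define a b where "a = (16*A - 8*B)/3" and "b = (16*B - 8*A)/3"
  have "a^2 + a*b + b^2 \<le> 1 \<or> (a - 1)^2 + (a - 1)*(b - 1) + (b - 1)^2 \<le> 1"
    by (rule oblique_sector_covered) (use assms in \<open>simp_all add: a_def b_def field_simps\<close>)
  moreover have "a^2 + a*b + b^2 = 16 * N"
    and "(a - 1)^2 + (a - 1)*(b - 1) + (b - 1)^2 = 16 * (N - (A + B)/2 + 3/16)"
    by (simp_all add: a_def b_def N_def power2_eq_square field_simps)
  ultimately show ?thesis
    by argo
qed

lemma sixth_turn_values:
  fixes a :: "nat \<Rightarrow> real"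
  assumes "\<And>j. a (Suc (Suc j)) = a (Suc j) - a j"
  shows "a 2 = a 1 - a 0" "a 3 = - a 0" "a 4 = - a 1" "a 5 = a 0 - a 1" "a 6 = a 0"
  using assms[of 0] assms[of 1] assms[of 2] assms[of 3] assms[of 4]
  by (simp_all add: numeral_eq_Suc)

lemma exists_sector_index:
  fixes a :: "nat \<Rightarrow> real"
  assumes "\<And>j. a (Suc (Suc j)) = a (Suc j) - a j"
  obtains j where "j < 6" "a (Suc j) \<le> 2 * a j" "a j \<le> 2 * a (Suc j)"
proof -
  have "\<exists>j\<in>{0, 1, 2, 3, 4, 5}. a (Suc j) \<le> 2 * a j \<and> a j \<le> 2 * a (Suc j)"
    using sixth_turn_values[where a = a, OF assms] by (simp add: numeral_eq_Suc) argo
  then obtain j where "j \<in> {0, 1, 2, 3, 4, 5}" "a (Suc j) \<le> 2 * a j" "a j \<le> 2 * a (Suc j)"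
    by blast
  then show ?thesis
    using that[of j] by auto
qed

lemma inner_dir_sixth_turn_rec:
  "inner y (dir (\<theta> + real (Suc (Suc j)) * pi/3))
     = inner y (dir (\<theta> + real (Suc j) * pi/3)) - inner y (dir (\<theta> + real j * pi/3))"
proof -
  have "\<theta> + real (Suc (Suc j)) * pi/3 = (\<theta> + real j * pi/3) + 2*pi/3"
    and "\<theta> + real (Suc j) * pi/3 = (\<theta> + real j * pi/3) + pi/3"
    by (simp_all add: field_simps)
  then show ?thesis
    by (simp only: dir_add_two_thirds_pi inner_diff_right)
qed

definition hexagon_centres :: "real \<Rightarrow> (real^2) set" where
  "hexagon_centres \<theta> = insert 0 ((\<lambda>j. outer_centre (\<theta> + real j * pi/3)) ` {..<6})"

lemma card_hexagon_centres: "card (hexagon_centres \<theta>) \<le> 7"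
proof -
  have "card ((\<lambda>j. outer_centre (\<theta> + real j * pi/3)) ` {..<6::nat}) \<le> 6"
    using card_image_le[of "{..<6::nat}"] by simp
  then show ?thesis
    by (simp add: hexagon_centres_def card_insert_if)
qed

lemma hexagon_covered:
  fixes y :: "real^2"
  assumes "\<bar>inner y (dir \<theta>)\<bar> \<le> 1/2" "\<bar>inner y (dir (\<theta> + pi/3))\<bar> \<le> 1/2"
    and "\<bar>inner y (dir (\<theta> + 2*pi/3))\<bar> \<le> 1/2"
  shows "\<exists>w\<in>hexagon_centres \<theta>. norm (y - w) \<le> 1/4"
proof -
  define a where "a j = inner y (dir (\<theta> + real j * pi/3))" for j :: nat
  have a_rec: "a (Suc (Suc j)) = a (Suc j) - a j" for j
    unfolding a_def by (rule inner_dir_sixth_turn_rec)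
  have "\<bar>a 0\<bar> \<le> 1/2" "\<bar>a 1\<bar> \<le> 1/2" "\<bar>a 1 - a 0\<bar> \<le> 1/2"
    using assms by (simp_all add: a_def dir_add_two_thirds_pi inner_diff_right)
  then have "a 0 \<le> 1/2" "- a 0 \<le> 1/2" "a 1 \<le> 1/2" "- a 1 \<le> 1/2" "a 1 - a 0 \<le> 1/2"
    "a 0 - a 1 \<le> 1/2"
    by arith+
  then have a_bound: "a j \<le> 1/2" if "j \<le> 6" for j
  proof -
    have "j \<in> {0, 1, 2, 3, 4, 5, 6}" using that by (simp add: le_Suc_eq numeral_eq_Suc)
    then show ?thesis
      using \<open>a 0 \<le> 1/2\<close> \<open>- a 0 \<le> 1/2\<close> \<open>a 1 \<le> 1/2\<close> \<open>- a 1 \<le> 1/2\<close>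
        \<open>a 1 - a 0 \<le> 1/2\<close> \<open>a 0 - a 1 \<le> 1/2\<close> sixth_turn_values[where a = a, OF a_rec]
      by auto
  qed
  \<comment> \<open>y lies in the sector between the directions \<theta> + j pi/3 and \<theta> + (j + 1) pi/3\<close>
  obtain j where j: "j < 6" "a (Suc j) \<le> 2 * a j" "a j \<le> 2 * a (Suc j)"
    using exists_sector_index[where a = a, OF a_rec] by blast
  have angle: "\<theta> + real j * pi/3 + pi/3 = \<theta> + real (Suc j) * pi/3"
    by (simp add: field_simps)
  have hex: "(norm y)^2 = 4/3 * ((a j)^2 - a j * a (Suc j) + (a (Suc j))^2)"
    using norm_sq_eq_hex_form[of y "\<theta> + real j * pi/3", unfolded angle] by (simp only: a_def)
  have outer: "(norm (y - outer_centre (\<theta> + real j * pi/3)))^2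
      = (norm y)^2 - (a j + a (Suc j))/2 + 3/16"
    using norm_diff_outer_centre_sq[of y "\<theta> + real j * pi/3", unfolded angle] by (simp only: a_def)
  from hex_sector_covered[OF a_bound a_bound j(2,3)] j(1)
  have "(norm y)^2 \<le> (1/4)^2 \<or> (norm (y - outer_centre (\<theta> + real j * pi/3)))^2 \<le> (1/4)^2"
    unfolding hex[symmetric] outer by (simp add: power_divide)
  then show ?thesis
    using j(1) by (auto simp: hexagon_centres_def dest: power2_le_imp_le)
qed

section \<open>Seven discs cover a set of diameter 1\<close>

lemma continuous_on_Max_image:
  fixes f :: "'b \<Rightarrow> 'a::topological_space \<Rightarrow> 'c::linorder_topology"
  assumes "finite P" "P \<noteq> {}" "\<And>p. p \<in> P \<Longrightarrow> continuous_on S (f p)"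
  shows "continuous_on S (\<lambda>x. Max ((\<lambda>p. f p x) ` P))"
  using assms
proof (induction P rule: finite_ne_induct)
  case (insert p P)
  then show ?case
    by (simp add: continuous_on_max)
qed simp

lemma continuous_on_Min_image:
  fixes f :: "'b \<Rightarrow> 'a::topological_space \<Rightarrow> 'c::linorder_topology"
  assumes "finite P" "P \<noteq> {}" "\<And>p. p \<in> P \<Longrightarrow> continuous_on S (f p)"
  shows "continuous_on S (\<lambda>x. Min ((\<lambda>p. f p x) ` P))"
  using assms
proof (induction P rule: finite_ne_induct)
  case (insert p P)
  then show ?case
    by (simp add: continuous_on_min)
qed simp

definition strip_mid :: "(real^2) set \<Rightarrow> real \<Rightarrow> real" where
  "strip_mid P \<phi> = (Max ((\<lambda>p. inner p (dir \<phi>)) ` P) + Min ((\<lambda>p. inner p (dir \<phi>)) ` P)) / 2"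

lemma strip_mid_add_pi:
  assumes "finite P" "P \<noteq> {}"
  shows "strip_mid P (\<phi> + pi) = - strip_mid P \<phi>"
proof -
  have "(\<lambda>p. inner p (dir (\<phi> + pi))) ` P = uminus ` (\<lambda>p. inner p (dir \<phi>)) ` P"
    by (simp add: dir_add_pi image_image)
  then have "Max ((\<lambda>p. inner p (dir (\<phi> + pi))) ` P) = - Min ((\<lambda>p. inner p (dir \<phi>)) ` P)"
    and "Min ((\<lambda>p. inner p (dir (\<phi> + pi))) ` P) = - Max ((\<lambda>p. inner p (dir \<phi>)) ` P)"
    using assms by simp_all
  then show ?thesis
    by (simp add: strip_mid_def field_simps)
qed

lemma continuous_on_strip_mid:
  fixes f :: "'a::t2_space \<Rightarrow> real"
  assumes "finite P" "P \<noteq> {}" "continuous_on S f"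
  shows "continuous_on S (\<lambda>x. strip_mid P (f x))"
  unfolding strip_mid_def inner_dir
  by (intro continuous_intros continuous_on_Max_image continuous_on_Min_image assms(1,2))
    (auto intro: continuous_on_cos continuous_on_sin assms(3))

text \<open>As dir (\<theta> + 2 pi/3) = dir (\<theta> + pi/3) - dir \<theta>, the balance condition says that the three
  midlines are concurrent.\<close>

lemma exists_balanced_direction:
  assumes "finite P" "P \<noteq> {}"
  obtains \<theta> where "strip_mid P \<theta> - strip_mid P (\<theta> + pi/3) + strip_mid P (\<theta> + 2*pi/3) = 0"
proof -
  define F where "F \<theta> = strip_mid P \<theta> - strip_mid P (\<theta> + pi/3) + strip_mid P (\<theta> + 2*pi/3)" for \<theta>
  have "pi/3 + pi/3 = 2*pi/3" "pi/3 + 2*pi/3 = pi" by simp_all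
  then have F_third: "F (pi/3) = - F 0"
    using strip_mid_add_pi[OF assms, of 0] by (simp add: F_def)
  have "continuous_on {0..pi/3} F"
    unfolding F_def by (intro continuous_intros continuous_on_strip_mid assms)
  then obtain \<theta> where "F \<theta> = 0"
    using IVT'[of F 0 0 "pi/3"] IVT2'[of F "pi/3" 0 0] F_third
    by (cases "F 0 \<le> 0") force+
  then show ?thesis
    using that by (simp add: F_def)
qed

lemma strip_mid_bound:
  assumes "finite P" "\<forall>p\<in>P. \<forall>q\<in>P. dist p q \<le> 1" "p \<in> P"
  shows "\<bar>inner p (dir \<phi>) - strip_mid P \<phi>\<bar> \<le> 1/2"
proof -
  let ?S = "(\<lambda>p. inner p (dir \<phi>)) ` P"
  have S: "finite ?S" "?S \<noteq> {}" using assms(1,3) by auto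
  obtain q where q: "q \<in> P" "inner q (dir \<phi>) = Max ?S" using Max_in[OF S] by auto
  obtain r where r: "r \<in> P" "inner r (dir \<phi>) = Min ?S" using Min_in[OF S] by auto
  have "Max ?S - Min ?S \<le> 1"
    using inner_dir_le_dist[of q r \<phi>] assms(2) q r by (force simp: inner_diff_left)
  moreover have "Min ?S \<le> inner p (dir \<phi>)" "inner p (dir \<phi>) \<le> Max ?S"
    using S assms(3) by auto
  ultimately show ?thesis
    unfolding strip_mid_def abs_le_iff add_divide_distrib by linarith
qed

lemma exists_inner_dir_pair: "\<exists>c. inner c (dir \<theta>) = a \<and> inner c (dir (\<theta> + pi/3)) = b"
proof -
  define D where "D = sin (\<theta> + pi/3) * cos \<theta> - cos (\<theta> + pi/3) * sin \<theta>"
  have D: "D = sqrt 3 / 2"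
    using sin_diff[of "\<theta> + pi/3" \<theta>] by (simp add: D_def sin_60)
  define v :: "real^2" where
    "v = vector [a * sin (\<theta> + pi/3) - b * sin \<theta>, b * cos \<theta> - a * cos (\<theta> + pi/3)]"
  have "inner v (dir \<theta>) = a * D" "inner v (dir (\<theta> + pi/3)) = b * D"
    by (simp_all add: v_def inner_dir D_def algebra_simps)
  moreover have "D \<noteq> 0"
    unfolding D by simp
  ultimately have "inner ((1/D) *\<^sub>R v) (dir \<theta>) = a \<and> inner ((1/D) *\<^sub>R v) (dir (\<theta> + pi/3)) = b"
    by simp
  then show ?thesis ..
qed

lemma cover_by_seven_discs:
  fixes P :: "(real^2) set"
  assumes "finite P" "\<forall>p\<in>P. \<forall>q\<in>P. dist p q \<le> 1"
  shows "\<exists>C. finite C \<and> card C \<le> 7 \<and> P \<subseteq> (\<Union>w\<in>C. cball w (1/4))"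
proof (cases "P = {}")
  case False
  obtain \<theta> where bal: "strip_mid P \<theta> - strip_mid P (\<theta> + pi/3) + strip_mid P (\<theta> + 2*pi/3) = 0"
    using exists_balanced_direction[OF assms(1) False] by blast
  obtain c where c0: "inner c (dir \<theta>) = strip_mid P \<theta>"
    and c1: "inner c (dir (\<theta> + pi/3)) = strip_mid P (\<theta> + pi/3)"
    using exists_inner_dir_pair by blast
  have c2: "inner c (dir (\<theta> + 2*pi/3)) = strip_mid P (\<theta> + 2*pi/3)"
    using c0 c1 bal by (simp add: dir_add_two_thirds_pi inner_diff_right)
  have "p \<in> (\<Union>w\<in>(+) c ` hexagon_centres \<theta>. cball w (1/4))" if "p \<in> P" for p
  proof -
    have strip: "\<bar>inner (p - c) (dir \<phi>)\<bar> \<le> 1/2" if "inner c (dir \<phi>) = strip_mid P \<phi>" for \<phi>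
      using strip_mid_bound[OF assms \<open>p \<in> P\<close>, of \<phi>] that by (simp add: inner_diff_left)
    obtain w where "w \<in> hexagon_centres \<theta>" "norm (p - c - w) \<le> 1/4"
      using hexagon_covered[OF strip[OF c0] strip[OF c1] strip[OF c2]] by blast
    moreover have "dist (c + w) p = norm (p - c - w)"
      using norm_minus_commute[of "c + w" p] by (simp add: dist_norm diff_diff_eq)
    ultimately show ?thesis
      by (intro UN_I[of "c + w"]) auto
  qed
  then have "P \<subseteq> (\<Union>w\<in>(+) c ` hexagon_centres \<theta>. cball w (1/4))"
    by blast
  moreover have "finite ((+) c ` hexagon_centres \<theta>)"
    by (simp add: hexagon_centres_def)
  moreover have "card ((+) c ` hexagon_centres \<theta>) \<le> 7"
    using card_image_le[of "hexagon_centres \<theta>" "(+) c"] card_hexagon_centres[of \<theta>]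
    by (simp add: hexagon_centres_def)
  ultimately show ?thesis
    by blast
qed (intro exI[of _ "{}"], simp)

section \<open>A ring of 6m points\<close>

text \<open>Any sufficiently small delta and beta would do; the proofs need delta \<le> 1/100,
  beta \<le> kappa/80000 and 8 (delta + beta + delta^2) < kappa/4.\<close>

definition kappa :: "nat \<Rightarrow> real" where
  "kappa m = 1 - cos (pi / (3 * real m))"

definition delta :: "nat \<Rightarrow> real" where
  "delta m = kappa m / 100"

definition beta :: "nat \<Rightarrow> real" where
  "beta m = (delta m)^2 / 4"

lemma kappa_bounds:
  assumes "1 \<le> m"
  shows "0 < kappa m" "kappa m \<le> 1/2"
proof -
  define x where "x = pi / (3 * real m)"
  have "0 < x" "x \<le> pi/3"
    using assms by (simp_all add: x_def field_simps)
  then have "cos x < cos 0" "cos (pi/3) \<le> cos x"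
    by (intro cos_monotone_0_pi cos_monotone_0_pi_le; simp)+
  then show "0 < kappa m" "kappa m \<le> 1/2"
    by (simp_all add: kappa_def x_def[symmetric] cos_60)
qed

lemma parameter_bounds:
  assumes "1 \<le> m"
  shows "0 < delta m" "delta m \<le> 1/200" "0 < beta m" "beta m \<le> kappa m / 80000"
    "beta m \<le> 1/1000"
proof -
  note k = kappa_bounds[OF assms]
  show "0 < delta m" "delta m \<le> 1/200" "0 < beta m"
    using k by (simp_all add: delta_def beta_def)
  have "kappa m * kappa m \<le> kappa m * (1/2)"
    using k by (intro mult_left_mono) auto
  then show "beta m \<le> kappa m / 80000"
    by (simp add: beta_def delta_def power2_eq_square)
  then show "beta m \<le> 1/1000"
    using k by simp
qed

lemma step_angle_bounds:
  assumes "1 \<le> m"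
  defines "x \<equiv> pi / (3 * real m)"
  shows "0 < x" "x \<le> pi/3" "real m * x = pi/3" "cos x = 1 - kappa m"
  using assms by (simp_all add: x_def kappa_def field_simps)

lemma cos_multiple_step_special:
  assumes "1 \<le> m"
  defines "x \<equiv> pi / (3 * real m)"
  shows "cos (real m * x) = 1/2" "cos (real (3*m) * x) = -1"
proof -
  have mx: "real m * x = pi/3"
    using step_angle_bounds(3)[OF assms(1)] by (simp add: x_def)
  then show "cos (real m * x) = 1/2"
    by (simp only: cos_60)
  have "real (3*m) * x = pi"
    using mx by simp
  then show "cos (real (3*m) * x) = -1"
    by simp
qed

lemma cos_multiple_step_upper:
  fixes m d :: nat
  assumes m: "1 \<le> m" and d: "d \<le> 3*m"
  defines "x \<equiv> pi / (3 * real m)"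
  shows "1 \<le> d \<Longrightarrow> cos (real d * x) \<le> 1 - kappa m"
    and "m + 1 \<le> d \<Longrightarrow> cos (real d * x) \<le> (1 - kappa m)/2"
proof -
  note x = step_angle_bounds[OF m, folded x_def]
  have "real d * x \<le> (3 * real m) * x"
    using d x by (intro mult_right_mono) auto
  also have "\<dots> = pi"
    using x(3) by simp
  finally have dx: "real d * x \<le> pi" .
  show "1 \<le> d \<Longrightarrow> cos (real d * x) \<le> 1 - kappa m"
    using x dx by (simp add: cos_monotone_0_pi_le flip: x(4))
  show "m + 1 \<le> d \<Longrightarrow> cos (real d * x) \<le> (1 - kappa m)/2"
  proof -
    assume "m + 1 \<le> d"
    then have "pi/3 + x \<le> real d * x"
      using mult_right_mono[of "real m + 1" "real d" x] x by (simp add: algebra_simps)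
    then have "cos (real d * x) \<le> cos (pi/3 + x)"
      using x dx by (intro cos_monotone_0_pi_le) auto
    also have "\<dots> = cos x / 2 - sqrt 3 / 2 * sin x"
      by (simp add: cos_add cos_60 sin_60)
    also have "\<dots> \<le> cos x / 2"
      using x(1,2) by (simp add: sin_ge_zero)
    finally show ?thesis
      by (simp add: x(4))
  qed
qed

lemma cos_multiple_step_lower:
  fixes m d :: nat
  assumes m: "1 \<le> m" and d: "d + 1 \<le> 3*m"
  defines "x \<equiv> pi / (3 * real m)"
  shows "- (1 - kappa m) \<le> cos (real d * x)"
proof -
  note x = step_angle_bounds[OF m, folded x_def]
  have "real d * x \<le> pi - x"
    using mult_right_mono[of "real d + 1" "3 * real m" x] d x by (simp add: algebra_simps)
  then have "cos (pi - x) \<le> cos (real d * x)"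
    using x by (intro cos_monotone_0_pi_le) auto
  then show ?thesis
    by (simp add: x(4))
qed

definition cyc_dist :: "nat \<Rightarrow> nat \<Rightarrow> nat \<Rightarrow> nat" where
  "cyc_dist m j k = (let t = (if k \<le> j then j - k else k - j) in min t (6*m - t))"

lemma cyc_dist_sym: "cyc_dist m j k = cyc_dist m k j"
  unfolding cyc_dist_def Let_def by auto

lemma cyc_dist_le: "cyc_dist m j k \<le> 3*m"
  unfolding cyc_dist_def Let_def by auto

lemma cyc_dist_eq_0_iff: "j < 6*m \<Longrightarrow> k < 6*m \<Longrightarrow> cyc_dist m j k = 0 \<longleftrightarrow> j = k"
  unfolding cyc_dist_def Let_def by (auto split: if_splits)

lemma cos_diff_eq_cos_cyc_dist:
  assumes "j < 6*m" "k < 6*m"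
  defines "x \<equiv> pi / (3 * real m)"
  shows "cos (real j * x - real k * x) = cos (real (cyc_dist m j k) * x)"
proof -
  define t where "t = (if k \<le> j then j - k else k - j)"
  have "cos (real j * x - real k * x) = cos (real t * x)"
  proof (cases "k \<le> j")
    case False
    then have "real t * x = - (real j * x - real k * x)"
      by (simp add: t_def algebra_simps)
    then show ?thesis
      by (metis cos_minus)
  qed (simp add: t_def left_diff_distrib)
  moreover have "cos (real t * x) = cos (real (6*m - t) * x)" if "1 \<le> m"
  proof -
    have "t < 6*m" using assms(1,2) by (auto simp: t_def)
    then have "real (6*m - t) * x = 2*pi - real t * x"
      using that by (simp add: x_def field_simps)
    then show ?thesis by simp
  qed
  ultimately show ?thesis
    using assms(1) by (simp add: cyc_dist_def Let_def t_def[symmetric] min_def)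
qed

text \<open>The radii alternate between 1/2 + beta and 1/2 - beta in blocks of m consecutive points, so
  that points m or 3m steps apart have radii summing to 1: the former are then more than 1/2
  apart and antipodal ones exactly 1.\<close>

definition ring_radius :: "nat \<Rightarrow> nat \<Rightarrow> real" where
  "ring_radius m j = 1/2 + (-1)^(j div m) * beta m"

definition ring_point :: "nat \<Rightarrow> nat \<Rightarrow> real^2" where
  "ring_point m j = ring_radius m j *\<^sub>R dir (real j * (pi / (3 * real m)))"

lemma ring_radius_near_half: "1 \<le> m \<Longrightarrow> \<bar>ring_radius m j - 1/2\<bar> \<le> beta m"
  using parameter_bounds(3)[of m] by (simp add: ring_radius_def abs_mult)

lemma norm_ring_point:
  assumes "1 \<le> m"
  shows "norm (ring_point m j) = ring_radius m j"
  using ring_radius_near_half[OF assms, of j] parameter_bounds(5)[OF assms]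
  by (simp add: ring_point_def)

lemma dist_ring_point_sq:
  assumes "j < 6*m" "k < 6*m"
  shows "(dist (ring_point m j) (ring_point m k))^2
           = (ring_radius m j)^2 + (ring_radius m k)^2
             - 2 * ring_radius m j * ring_radius m k * cos (real (cyc_dist m j k) * (pi / (3 * real m)))"
proof -
  define x where "x = pi / (3 * real m)"
  define u v where "u = dir (real j * x)" and "v = dir (real k * x)"
  have "inner u v = cos (real (cyc_dist m j k) * x)"
    using cos_diff_eq_cos_cyc_dist[OF assms] by (simp add: u_def v_def inner_dir_dir x_def)
  moreover have "inner u u = 1" "inner v v = 1"
    by (simp_all add: u_def v_def)
  ultimately show ?thesis
    unfolding dist_norm power2_norm_eq_inner ring_point_def x_def[symmetric] u_def[symmetric]
      v_def[symmetric]
    by (simp add: inner_commute[of v u] power2_eq_square algebra_simps)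
qed

lemma ring_radius_opposite:
  assumes m: "1 \<le> m" and jk: "j < 6*m" "k < 6*m"
    and d: "cyc_dist m j k = m \<or> cyc_dist m j k = 3*m"
  shows "ring_radius m j + ring_radius m k = 1" "ring_radius m j \<noteq> ring_radius m k"
proof -
  have "odd (j div m + k div m)" if "k \<le> j" "j < 6*m" "cyc_dist m j k = m \<or> cyc_dist m j k = 3*m"
    for j k
  proof -
    have "j = k + m \<or> j = k + 3*m \<or> j = k + 5*m"
      using that unfolding cyc_dist_def Let_def by (auto simp: min_def split: if_splits)
    then show ?thesis
      using m by auto
  qed
  from this[of k j] this[of j k] have "odd (j div m + k div m)"
    using jk d cyc_dist_sym[of m j k] by (cases "k \<le> j") (auto simp: add.commute)
  then have "(-1::real)^(j div m) = - ((-1)^(k div m))"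
    by (cases "even (j div m)") (auto simp: minus_one_power_iff)
  then show "ring_radius m j + ring_radius m k = 1" "ring_radius m j \<noteq> ring_radius m k"
    using parameter_bounds(3)[OF m] by (auto simp: ring_radius_def minus_one_power_iff split: if_splits)
qed

lemma prod_near_half_ge:
  fixes r1 r2 b :: real
  assumes "b \<le> 1/2" "\<bar>r1 - 1/2\<bar> \<le> b" "\<bar>r2 - 1/2\<bar> \<le> b"
  shows "1/4 - b \<le> r1 * r2"
proof -
  have "(1/2 - b) * (1/2 - b) \<le> r1 * r2"
    using assms by (intro mult_mono) auto
  moreover have "(1/2 - b) * (1/2 - b) = 1/4 - b + b * b"
    by (simp add: algebra_simps)
  ultimately show ?thesis
    using zero_le_square[of b] by linarith
qed

lemma cosine_law_ge:
  fixes r1 r2 b k C :: real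
  assumes "0 \<le> k" "b \<le> 1/8" "\<bar>r1 - 1/2\<bar> \<le> b" "\<bar>r2 - 1/2\<bar> \<le> b" "C \<le> 1 - k"
  shows "k/4 \<le> r1^2 + r2^2 - 2*r1*r2*C"
proof -
  have p: "1/8 \<le> r1 * r2"
    using prod_near_half_ge[of b r1 r2] assms by linarith
  have "1/8 * k \<le> r1 * r2 * (1 - C)"
    using p assms by (intro mult_mono) auto
  moreover have "r1^2 + r2^2 - 2*r1*r2*C = (r1 - r2)^2 + 2 * (r1 * r2 * (1 - C))"
    by (simp add: power2_eq_square algebra_simps)
  ultimately show ?thesis
    using zero_le_power2[of "r1 - r2"] by linarith
qed

lemma cosine_law_gt_quarter:
  fixes r1 r2 b k C :: real
  assumes "0 < k" "k \<le> 1/2" "b \<le> k/16" "\<bar>r1 - 1/2\<bar> \<le> b" "\<bar>r2 - 1/2\<bar> \<le> b"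
    and "C \<le> (1 - k)/2"
  shows "1/4 < r1^2 + r2^2 - 2*r1*r2*C"
proof -
  have p: "1/4 - b \<le> r1 * r2"
    using prod_near_half_ge[of b r1 r2] assms by linarith
  have "(1/4 - b) * (1 + k) \<le> r1 * r2 * (2 * (1 - C))"
    using p assms by (intro mult_mono) auto
  moreover have "b * k \<le> b * (1/2)"
    using assms by (intro mult_left_mono) auto
  moreover have "r1^2 + r2^2 - 2*r1*r2*C = (r1 - r2)^2 + r1 * r2 * (2 * (1 - C))"
    by (simp add: power2_eq_square algebra_simps)
  moreover have "(1/4 - b) * (1 + k) = 1/4 + k/4 - b - b * k"
    by (simp add: algebra_simps)
  ultimately show ?thesis
    using assms zero_le_power2[of "r1 - r2"] by linarith
qed

lemma cosine_law_sixty_gt_quarter: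
  fixes r1 r2 :: real
  assumes "r1 + r2 = 1" "r1 \<noteq> r2"
  shows "1/4 < r1^2 + r2^2 - 2*r1*r2*(1/2)"
proof -
  have "r1^2 + r2^2 - 2*r1*r2*(1/2) = 1/4 * (r1 + r2)^2 + 3/4 * (r1 - r2)^2"
    by (simp add: power2_eq_square field_simps)
  then show ?thesis
    using assms by simp
qed

lemma cosine_law_antipodal:
  fixes r1 r2 :: real
  assumes "r1 + r2 = 1"
  shows "r1^2 + r2^2 - 2*r1*r2*(-1) = 1"
proof -
  have "r1^2 + r2^2 - 2*r1*r2*(-1) = (r1 + r2)^2"
    by (simp add: power2_eq_square algebra_simps)
  then show ?thesis
    using assms by simp
qed

lemma cosine_law_le_one:
  fixes r1 r2 b k C :: real
  assumes "0 < k" "b \<le> k/20" "b \<le> 1/1000" "\<bar>r1 - 1/2\<bar> \<le> b" "\<bar>r2 - 1/2\<bar> \<le> b"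
    and "- (1 - k) \<le> C"
  shows "r1^2 + r2^2 - 2*r1*r2*C \<le> 1"
proof -
  have p: "1/8 \<le> r1 * r2"
    using prod_near_half_ge[of b r1 r2] assms by linarith
  have "1/8 * k \<le> r1 * r2 * (1 + C)"
    using p assms by (intro mult_mono) auto
  moreover have "(r1 + r2)^2 \<le> (1 + 2*b)^2"
    using assms by (intro power_mono) auto
  moreover have "r1^2 + r2^2 - 2*r1*r2*C = (r1 + r2)^2 - 2 * (r1 * r2 * (1 + C))"
    by (simp add: power2_eq_square algebra_simps)
  ultimately have "r1^2 + r2^2 - 2*r1*r2*C \<le> (1 + 2*b)^2 - k/4"
    by linarith
  also have "\<dots> = 1 + 4*b + 4*(b*b) - k/4"
    by (simp add: power2_eq_square algebra_simps)
  also have "\<dots> \<le> 1"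
  proof -
    have "0 \<le> b"
      using assms(4) by (meson abs_ge_zero order_trans)
    then have "b * b \<le> b * (1/1000)"
      using assms by (intro mult_left_mono) auto
    then show ?thesis
      using assms(1-3) by linarith
  qed
  finally show ?thesis .
qed

lemma ring_point_dist_sq_ge:
  assumes m: "1 \<le> m" and jk: "j < 6*m" "k < 6*m" "j \<noteq> k"
  shows "kappa m / 4 \<le> (dist (ring_point m j) (ring_point m k))^2"
proof -
  have "1 \<le> cyc_dist m j k"
    using cyc_dist_eq_0_iff[OF jk(1,2)] jk(3) by linarith
  then have "cos (real (cyc_dist m j k) * (pi / (3 * real m))) \<le> 1 - kappa m"
    using cos_multiple_step_upper(1)[OF m cyc_dist_le] by blast
  then show ?thesis
    unfolding dist_ring_point_sq[OF jk(1,2)]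
    using kappa_bounds[OF m] parameter_bounds[OF m] ring_radius_near_half[OF m]
    by (intro cosine_law_ge[where b = "beta m"]) auto
qed

lemma ring_point_dist_gt_half:
  assumes m: "1 \<le> m" and jk: "j < 6*m" "k < 6*m" and d: "m \<le> cyc_dist m j k"
  shows "1/2 < dist (ring_point m j) (ring_point m k)"
proof -
  let ?C = "cos (real (cyc_dist m j k) * (pi / (3 * real m)))"
  have "1/4 < (dist (ring_point m j) (ring_point m k))^2"
  proof (cases "cyc_dist m j k = m")
    case True
    then have C: "?C = 1/2"
      using cos_multiple_step_special(1)[OF m] by simp
    have "ring_radius m j + ring_radius m k = 1" "ring_radius m j \<noteq> ring_radius m k"
      using ring_radius_opposite[OF m jk] True by auto
    from cosine_law_sixty_gt_quarter[OF this]
    show ?thesis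
      unfolding dist_ring_point_sq[OF jk] C .
  next
    case False
    then have "?C \<le> (1 - kappa m)/2"
      using cos_multiple_step_upper(2)[OF m cyc_dist_le] d by simp
    then show ?thesis
      unfolding dist_ring_point_sq[OF jk]
      using kappa_bounds[OF m] parameter_bounds[OF m] ring_radius_near_half[OF m]
      by (intro cosine_law_gt_quarter[where b = "beta m" and k = "kappa m"]) auto
  qed
  then have "(1/2)^2 < (dist (ring_point m j) (ring_point m k))^2"
    by (simp add: power_divide)
  then show ?thesis
    by (rule power_less_imp_less_base) simp
qed

lemma ring_point_dist_le_one:
  assumes m: "1 \<le> m" and jk: "j < 6*m" "k < 6*m"
  shows "dist (ring_point m j) (ring_point m k) \<le> 1"
proof -
  let ?C = "cos (real (cyc_dist m j k) * (pi / (3 * real m)))"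
  have "(dist (ring_point m j) (ring_point m k))^2 \<le> 1^2"
  proof (cases "cyc_dist m j k = 3*m")
    case True
    then have "?C = -1"
      using cos_multiple_step_special(2)[OF m] by simp
    then show ?thesis
      unfolding dist_ring_point_sq[OF jk]
      using cosine_law_antipodal ring_radius_opposite[OF m jk] True by simp
  next
    case False
    then have "- (1 - kappa m) \<le> ?C"
      using cos_multiple_step_lower[OF m, of "cyc_dist m j k"] cyc_dist_le[of m j k] by simp
    then show ?thesis
      unfolding dist_ring_point_sq[OF jk]
      using kappa_bounds[OF m] parameter_bounds[OF m] ring_radius_near_half[OF m]
      by (simp add: cosine_law_le_one[where b = "beta m" and k = "kappa m"])
  qed
  then show ?thesis
    by (rule power2_le_imp_le) simp
qed

lemma cyc_dist_ge_if_mod_eq: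
  assumes "k \<le> j" "j < 6*m" "j mod m = k mod m" "j \<noteq> k"
  shows "m \<le> cyc_dist m j k"
proof -
  obtain q where q: "j - k = m * q"
    using assms(1,3) mod_eq_dvd_iff_nat by blast
  have "q \<noteq> 0" using q assms(1,4) by (cases "q = 0") auto
  moreover have "q < 6"
    using q assms(2) by (metis diff_le_self le_less_trans mult.commute mult_less_cancel1)
  ultimately have "m * 1 \<le> m * q" "m * 1 \<le> m * (6 - q)"
    by (intro mult_le_mono2; simp)+
  then have "m \<le> m * q" "m \<le> 6*m - m * q"
    by (simp_all add: diff_mult_distrib2 mult.commute)
  then show ?thesis
    using q assms(1) by (simp add: cyc_dist_def Let_def)
qed

lemma card_le_if_cyc_dist_lt:
  assumes J: "J \<subseteq> {..<6*m}" and close: "\<forall>j\<in>J. \<forall>k\<in>J. cyc_dist m j k < m"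
  shows "card J \<le> m"
proof -
  have "inj_on (\<lambda>j. j mod m) J"
  proof (rule inj_onI)
    fix j k assume jk: "j \<in> J" "k \<in> J" "j mod m = k mod m"
    show "j = k"
    proof (rule ccontr)
      assume "j \<noteq> k"
      then have "m \<le> cyc_dist m j k"
        using cyc_dist_ge_if_mod_eq[of k j m] cyc_dist_ge_if_mod_eq[of j k m] cyc_dist_sym[of m j k]
          jk J by (cases "k \<le> j") auto
      then show False
        using close jk by force
    qed
  qed
  moreover have "(\<lambda>j. j mod m) ` J \<subseteq> {..<m}"
    using J by auto
  ultimately show ?thesis
    using card_inj_on_le[of "\<lambda>j. j mod m" J "{..<m}"] by simp
qed

definition ring_points :: "nat \<Rightarrow> (real^2) set" where
  "ring_points m = ring_point m ` {..<6*m}"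

lemma card_ring_points:
  assumes m: "1 \<le> m"
  shows "card (ring_points m) = 6*m"
proof -
  have "inj_on (ring_point m) {..<6*m}"
  proof (rule inj_onI)
    fix j k assume "j \<in> {..<6*m}" "k \<in> {..<6*m}" "ring_point m j = ring_point m k"
    then show "j = k"
      using ring_point_dist_sq_ge[OF m, of j k] kappa_bounds(1)[OF m] by fastforce
  qed
  then show ?thesis
    by (simp add: ring_points_def card_image)
qed

lemma ring_points_diameter:
  "1 \<le> m \<Longrightarrow> p \<in> ring_points m \<Longrightarrow> q \<in> ring_points m \<Longrightarrow> dist p q \<le> 1"
  unfolding ring_points_def using ring_point_dist_le_one by auto

lemma norm_ring_points:
  assumes "1 \<le> m" "p \<in> ring_points m"
  shows "1/2 - beta m \<le> norm p" "norm p \<le> 1/2 + beta m"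
proof -
  obtain j where "p = ring_point m j"
    using assms(2) by (auto simp: ring_points_def)
  then show "1/2 - beta m \<le> norm p" "norm p \<le> 1/2 + beta m"
    using norm_ring_point[OF assms(1), of j] ring_radius_near_half[OF assms(1), of j]
    by (simp_all add: abs_le_iff)
qed

lemma card_ring_points_inter_cball:
  assumes m: "1 \<le> m"
  shows "card (ring_points m \<inter> cball z (1/4)) \<le> m"
proof -
  define J where "J = {j \<in> {..<6*m}. ring_point m j \<in> cball z (1/4)}"
  have "ring_points m \<inter> cball z (1/4) = ring_point m ` J"
    by (auto simp: ring_points_def J_def)
  moreover have "card J \<le> m"
  proof (rule card_le_if_cyc_dist_lt)
    show "J \<subseteq> {..<6*m}"
      by (auto simp: J_def)
    show "\<forall>j\<in>J. \<forall>k\<in>J. cyc_dist m j k < m"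
    proof (intro ballI)
      fix j k assume "j \<in> J" "k \<in> J"
      then have "j < 6*m" "k < 6*m" "dist (ring_point m j) (ring_point m k) \<le> 1/2"
        using dist_triangle_le[of "ring_point m j" z "ring_point m k" "1/2"]
        by (auto simp: J_def dist_commute)
      then show "cyc_dist m j k < m"
        using ring_point_dist_gt_half[OF m] by force
    qed
  qed
  ultimately show ?thesis
    using card_image_le[of J "ring_point m"] by (simp add: J_def)
qed

section \<open>Discs reaching the centre\<close>

lemma lune_bound:
  fixes t ip w b d :: real
  assumes A: "(1/2 - b)^2 \<le> t^2 + 2*ip + w" and w: "0 \<le> w" "w \<le> 1/16"
    and t: "1/4 - b \<le> t" "t \<le> 1/4 + d"
    and d: "0 \<le> d" "d \<le> 1/100" and b: "0 \<le> b" "b \<le> 1/100"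
  shows "w - ip/(2*t) + 1/16 \<le> 2*(d + b + d^2)"
proof -
  define E where "E = 2*(d + b + d^2)"
  have t0: "0 < t" using t b by linarith
  have E0: "0 \<le> E"
    using d b by (simp add: E_def)
  have "t * w \<le> t * (1/16)"
    using t0 w by (intro mult_left_mono) auto
  moreover have "t * t \<le> 1/16 + d/2 + d * d"
    using mult_mono[OF t(2) t(2)] t0 d by (simp add: algebra_simps)
  moreover have "E/4 - b * E \<le> t * E"
    using mult_right_mono[OF t(1) E0] by (simp add: algebra_simps)
  moreover have "b * E \<le> E/100"
    using mult_right_mono[OF b(2) E0] by simp
  moreover have "1/4 - b + b * b \<le> t * t + 2*ip + w"
    using A by (simp add: power2_eq_square algebra_simps)
  moreover have "E = 2*d + 2*b + 2*(d*d)"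
    by (simp add: E_def power2_eq_square)
  ultimately have "4 * (t * w) - 2 * ip + t/4 \<le> 4 * (t * E)"
    using E0 w t zero_le_square[of b] by linarith
  moreover have "w - ip/(2*t) + 1/16 = (4 * (t * w) - 2 * ip + t/4) / (4*t)"
    using t0 by (simp add: field_simps)
  ultimately have "w - ip/(2*t) + 1/16 \<le> E"
    using t0 by (simp add: divide_le_eq algebra_simps)
  then show ?thesis
    by (simp add: E_def)
qed

text \<open>A disc of radius 1/4 whose centre z has norm about 1/4 meets the complement of the disc of
  radius 1/2 - b only in a thin lune around its far point z + z/(4 norm z).\<close>

lemma far_point_dist_sq_le:
  fixes z p :: "real^2"
  assumes zp: "dist z p \<le> 1/4" and p: "1/2 - b \<le> norm p"
    and z: "1/4 - b \<le> norm z" "norm z \<le> 1/4 + d"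
    and d: "0 \<le> d" "d \<le> 1/100" and b: "0 \<le> b" "b \<le> 1/100"
  shows "(norm (p - z - (1 / (4 * norm z)) *\<^sub>R z))^2 \<le> 2*(d + b + d^2)"
proof -
  define t y where "t = norm z" and "y = p - z"
  have t0: "0 < t" using z b unfolding t_def by linarith
  have "norm y \<le> 1/4"
    using zp by (simp add: y_def dist_norm norm_minus_commute)
  then have "(norm y)^2 \<le> (1/4)^2"
    by (intro power_mono) auto
  then have y: "(norm y)^2 \<le> 1/16"
    by (simp add: power_divide)
  have "(1/2 - b)^2 \<le> (norm p)^2"
    using p b by (intro power_mono) auto
  also have "(norm p)^2 = t^2 + 2 * inner y z + (norm y)^2"
    unfolding power2_norm_eq_inner t_def y_def
    by (simp add: inner_commute algebra_simps)
  finally have A: "(1/2 - b)^2 \<le> t^2 + 2 * inner y z + (norm y)^2" .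
  have "(norm (y - (1 / (4*t)) *\<^sub>R z))^2
      = inner y y - 2 * (1 / (4*t)) * inner y z + (1 / (4*t))^2 * inner z z"
    unfolding power2_norm_eq_inner
    by (simp add: inner_commute power2_eq_square algebra_simps)
  also have "\<dots> = (norm y)^2 - inner y z / (2*t) + 1/16"
    using t0 by (simp add: dot_square_norm t_def power2_eq_square field_simps)
  also have "\<dots> \<le> 2*(d + b + d^2)"
    by (rule lune_bound[OF A _ y]) (use z d b in \<open>simp_all add: t_def\<close>)
  finally show ?thesis
    by (simp add: y_def t_def)
qed

lemma dist_sq_le_if_disc_meets_centre:
  fixes z c p q :: "real^2"
  assumes zc: "dist z c \<le> 1/4" and c: "norm c \<le> d"
    and zp: "dist z p \<le> 1/4" and zq: "dist z q \<le> 1/4"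
    and p: "1/2 - b \<le> norm p" and q: "1/2 - b \<le> norm q"
    and d: "0 \<le> d" "d \<le> 1/100" and b: "0 \<le> b" "b \<le> 1/100"
  shows "(dist p q)^2 \<le> 8*(d + b + d^2)"
proof -
  have "1/4 - b \<le> norm z"
    using norm_triangle_sub[of p z] zp p by (simp add: dist_norm norm_minus_commute)
  moreover have "norm z \<le> 1/4 + d"
    using norm_triangle_sub[of z c] zc c by (simp add: dist_norm)
  ultimately have a: "(norm (p - z - (1 / (4 * norm z)) *\<^sub>R z))^2 \<le> 2*(d + b + d^2)"
    and a': "(norm (q - z - (1 / (4 * norm z)) *\<^sub>R z))^2 \<le> 2*(d + b + d^2)"
    using far_point_dist_sq_le[OF zp p _ _ d b] far_point_dist_sq_le[OF zq q _ _ d b] by auto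
  have "dist p q \<le> norm (p - z - (1 / (4 * norm z)) *\<^sub>R z) + norm (q - z - (1 / (4 * norm z)) *\<^sub>R z)"
    using norm_triangle_ineq4[of "p - z - (1 / (4 * norm z)) *\<^sub>R z" "q - z - (1 / (4 * norm z)) *\<^sub>R z"]
    by (simp add: dist_norm)
  then have "(dist p q)^2
      \<le> (norm (p - z - (1 / (4 * norm z)) *\<^sub>R z) + norm (q - z - (1 / (4 * norm z)) *\<^sub>R z))^2"
    by (intro power_mono) auto
  also have "\<dots> \<le> 2 * ((norm (p - z - (1 / (4 * norm z)) *\<^sub>R z))^2
                      + (norm (q - z - (1 / (4 * norm z)) *\<^sub>R z))^2)"
    using sum_squares_bound[of "norm (p - z - (1 / (4 * norm z)) *\<^sub>R z)"
        "norm (q - z - (1 / (4 * norm z)) *\<^sub>R z)"]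
    by (simp add: power2_sum)
  finally show ?thesis
    using a a' by simp
qed

section \<open>The configuration of 7m points\<close>

definition centre_point :: "nat \<Rightarrow> nat \<Rightarrow> real^2" where
  "centre_point m i = vector [delta m * (2 * real i / (real m - 1) - 1), 0]"

definition centre_points :: "nat \<Rightarrow> (real^2) set" where
  "centre_points m = centre_point m ` {..<m}"

lemma norm_centre_point:
  assumes "2 \<le> m" "i < m"
  shows "norm (centre_point m i) \<le> delta m"
proof -
  have "0 \<le> 2 * real i / (real m - 1)" "2 * real i / (real m - 1) \<le> 2"
    using assms by (simp_all add: divide_le_eq)
  then have "\<bar>2 * real i / (real m - 1) - 1\<bar> \<le> 1"
    by (simp add: abs_le_iff)
  then have "\<bar>delta m * (2 * real i / (real m - 1) - 1)\<bar> \<le> delta m * 1"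
    using parameter_bounds(1)[of m] assms by (simp add: abs_mult mult_left_mono)
  then show ?thesis
    by (simp add: centre_point_def norm_vec_def L2_set_def sum_2)
qed

lemma card_centre_points:
  assumes "2 \<le> m"
  shows "card (centre_points m) = m"
proof -
  have "inj_on (centre_point m) {..<m}"
  proof (rule inj_onI)
    fix i k assume "centre_point m i = centre_point m k"
    then have "delta m * (2 * real i / (real m - 1) - 1) = delta m * (2 * real k / (real m - 1) - 1)"
      unfolding centre_point_def by (metis vector_2(1))
    then show "i = k"
      using parameter_bounds(1)[of m] assms by (simp add: field_simps)
  qed
  then show ?thesis
    by (simp add: centre_points_def card_image)
qed

lemma centre_point_ends:
  assumes "2 \<le> m"
  shows "centre_point m 0 = vector [- delta m, 0]" "centre_point m (m - 1) = vector [delta m, 0]"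
proof -
  have "real m - 1 \<noteq> 0"
    using assms by simp
  then show "centre_point m 0 = vector [- delta m, 0]" "centre_point m (m - 1) = vector [delta m, 0]"
    using assms by (simp_all add: centre_point_def field_simps)
qed

lemma far_from_a_centre_end:
  fixes p :: "real^2"
  assumes m: "2 \<le> m" and p: "1/2 - beta m \<le> norm p"
  shows "\<exists>i\<in>{0, m - 1}. 1/2 < dist p (centre_point m i)"
proof -
  have pr: "0 < delta m" "0 < beta m" "beta m \<le> 1/1000"
    using parameter_bounds[of m] m by simp_all
  have "(1/2 - beta m)^2 \<le> (norm p)^2"
    using p pr by (intro power_mono) auto
  then have "(1/2 - beta m)^2 \<le> (p$1)^2 + (p$2)^2"
    by (simp add: norm_vec2_sq)
  moreover have "(1/2 - beta m)^2 = 1/4 - beta m + (beta m)^2" "(delta m)^2 = 4 * beta m"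
    by (simp_all add: beta_def power2_eq_square algebra_simps)
  ultimately have key: "1/4 < (p$1)^2 + (p$2)^2 + (delta m)^2"
    using pr zero_le_power2[of "beta m"] by linarith
  have "(1/2)^2 < (dist p (vector [- s * delta m, 0]))^2"
    if "s = 1 \<or> s = -1" "0 \<le> s * p$1" for s :: real
  proof -
    have "(dist p (vector [- s * delta m, 0]))^2 = (p$1)^2 + (p$2)^2 + (delta m)^2 + 2 * delta m * (s * p$1)"
      unfolding dist_vec2_sq using that(1) by (auto simp: power2_eq_square algebra_simps)
    moreover have "0 \<le> 2 * delta m * (s * p$1)"
      using that(2) pr by simp
    moreover have "(1/2)^2 = (1/4::real)"
      by (simp add: power_divide)
    ultimately show ?thesis
      using key by linarith
  qed
  from this[of 1] this[of "-1"]
  have "1/2 < dist p (vector [- delta m, 0]) \<or> 1/2 < dist p (vector [delta m, 0])"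
    by (cases "0 \<le> p$1") (auto dest: power_less_imp_less_base)
  then show ?thesis
    using centre_point_ends[OF m] by auto
qed

lemma card_ring_points_inter_cball_le_one:
  assumes m: "1 \<le> m" and c: "c \<in> cball z (1/4)" "norm c \<le> delta m"
  shows "card (ring_points m \<inter> cball z (1/4)) \<le> 1"
proof -
  have "p = q" if p: "p \<in> ring_points m \<inter> cball z (1/4)" and q: "q \<in> ring_points m \<inter> cball z (1/4)"
    for p q
  proof (rule ccontr)
    assume "p \<noteq> q"
    moreover obtain j k where "j < 6*m" "k < 6*m" "p = ring_point m j" "q = ring_point m k"
      using p q by (auto simp: ring_points_def)
    ultimately have "kappa m / 4 \<le> (dist p q)^2"
      using ring_point_dist_sq_ge[OF m] by blast
    moreover have "(dist p q)^2 \<le> 8 * (delta m + beta m + (delta m)^2)"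
      by (rule dist_sq_le_if_disc_meets_centre[of z c "delta m" p q "beta m"])
        (use p q c parameter_bounds[OF m] norm_ring_points(1)[OF m] in \<open>auto simp: dist_commute\<close>)
    moreover have "delta m * delta m \<le> delta m * (1/200)"
      using parameter_bounds[OF m] by (intro mult_left_mono) auto
    then have "(delta m)^2 \<le> delta m / 200"
      by (simp add: power2_eq_square)
    moreover have "kappa m = 100 * delta m"
      by (simp add: delta_def)
    ultimately show False
      using parameter_bounds(4)[OF m] kappa_bounds(1)[OF m] by argo
  qed
  then show ?thesis
    by (simp add: card_le_Suc0_iff_eq ring_points_def)
qed

lemma card_centre_points_inter_cball_lt:
  assumes m: "2 \<le> m" and p: "p \<in> ring_points m" "p \<in> cball z (1/4)"
  shows "card (centre_points m \<inter> cball z (1/4)) \<le> m - 1"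
proof -
  have "1/2 - beta m \<le> norm p"
    using norm_ring_points(1)[of m p] m p(1) by simp
  then obtain i where i: "i \<in> {0, m - 1}" "1/2 < dist p (centre_point m i)"
    using far_from_a_centre_end[OF m] by blast
  have "dist p (centre_point m i) \<le> dist z p + dist z (centre_point m i)"
    by (rule dist_triangle3)
  then have "centre_point m i \<notin> cball z (1/4)"
    using i(2) p(2) by auto
  moreover have "centre_point m i \<in> centre_points m"
    using i(1) m by (auto simp: centre_points_def)
  ultimately have "centre_points m \<inter> cball z (1/4) \<subseteq> centre_points m - {centre_point m i}"
    by blast
  then have "card (centre_points m \<inter> cball z (1/4)) \<le> card (centre_points m - {centre_point m i})"
    by (intro card_mono) (auto simp: centre_points_def)
  also have "\<dots> = m - 1"
    using \<open>centre_point m i \<in> centre_points m\<close> card_centre_points[OF m]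
    by (simp add: centre_points_def)
  finally show ?thesis .
qed

definition config :: "nat \<Rightarrow> (real^2) set" where
  "config m = ring_points m \<union> centre_points m"

lemma
  assumes m: "2 \<le> m"
  shows finite_config: "finite (config m)" and card_config: "card (config m) = 7*m"
proof -
  have "ring_points m \<inter> centre_points m = {}"
  proof (rule ccontr)
    assume "ring_points m \<inter> centre_points m \<noteq> {}"
    then obtain i p where "i < m" "p = centre_point m i" "p \<in> ring_points m"
      by (auto simp: centre_points_def)
    then have "1/2 - beta m \<le> delta m"
      using norm_ring_points(1)[of m p] norm_centre_point[OF m] m by force
    then show False
      using parameter_bounds[of m] m by simp
  qed
  moreover have "finite (ring_points m)" "finite (centre_points m)"
    by (simp_all add: ring_points_def centre_points_def)
  ultimately show "finite (config m)" "card (config m) = 7*m"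
    using card_ring_points[of m] card_centre_points[OF m] m
    by (simp_all add: config_def card_Un_disjoint)
qed

lemma config_diameter:
  assumes m: "2 \<le> m" and pq: "p \<in> config m" "q \<in> config m"
  shows "dist p q \<le> 1"
proof -
  have pr: "delta m \<le> 1/200" "0 < beta m" "beta m \<le> 1/1000"
    using parameter_bounds[of m] m by simp_all
  have centre: "norm x \<le> delta m" if "x \<in> centre_points m" for x
    using that norm_centre_point[OF m] by (auto simp: centre_points_def)
  have small: "norm x \<le> 1/2 + beta m" if "x \<in> config m" for x
    using that centre[of x] norm_ring_points(2)[of m x] pr m by (auto simp: config_def)
  consider "p \<in> ring_points m" "q \<in> ring_points m" | "p \<in> centre_points m \<or> q \<in> centre_points m"
    using pq by (auto simp: config_def)
  then show ?thesis
  proof cases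
    case 1
    then show ?thesis
      using ring_points_diameter[of m p q] m by simp
  next
    case 2
    then have "norm p + norm q \<le> delta m + (1/2 + beta m)"
      using centre small[OF pq(1)] small[OF pq(2)] by force
    then show ?thesis
      using norm_triangle_ineq4[of p q] pr by (simp add: dist_norm)
  qed
qed

lemma card_config_inter_cball:
  assumes m: "2 \<le> m"
  shows "card (config m \<inter> cball z (1/4)) \<le> m"
proof -
  let ?R = "ring_points m \<inter> cball z (1/4)" and ?C = "centre_points m \<inter> cball z (1/4)"
  have "card (config m \<inter> cball z (1/4)) \<le> card ?R + card ?C"
    by (metis card_Un_le config_def inf_sup_distrib2)
  moreover have "card ?R + card ?C \<le> m"
  proof (cases "?C = {}")
    case True
    then show ?thesis
      using card_ring_points_inter_cball[of m] m by simp
  next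
    case False
    then obtain i where "i < m" "centre_point m i \<in> cball z (1/4)"
      by (auto simp: centre_points_def)
    then have c: "centre_point m i \<in> cball z (1/4)" "norm (centre_point m i) \<le> delta m"
      using norm_centre_point[OF m] by auto
    show ?thesis
    proof (cases "?R = {}")
      case True
      have "card ?C \<le> card (centre_points m)"
        by (intro card_mono) (simp_all add: centre_points_def)
      then show ?thesis
        using True card_centre_points[OF m] by simp
    next
      case False
      then obtain p where "p \<in> ring_points m" "p \<in> cball z (1/4)"
        by blast
      then show ?thesis
        using card_centre_points_inter_cball_lt[OF m] card_ring_points_inter_cball_le_one[OF _ c] m
        by fastforce
    qed
  qed
  ultimately show ?thesis
    by linarith
qed

lemma exists_cball_card_ge:
  fixes P C :: "'a::metric_space set"
  assumes "finite P" "finite C" "P \<subseteq> (\<Union>w\<in>C. cball w r)"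
  shows "\<exists>w. card P \<le> card C * card (P \<inter> cball w r)"
proof (rule ccontr)
  assume "\<not> ?thesis"
  then have less: "card C * card (P \<inter> cball w r) < card P" for w
    by (simp add: not_le)
  have "card C * card P \<le> card C * card (\<Union>w\<in>C. P \<inter> cball w r)"
    using assms by (intro mult_le_mono2 card_mono) auto
  also have "\<dots> \<le> card C * (\<Sum>w\<in>C. card (P \<inter> cball w r))"
    using assms(2) by (intro mult_le_mono2 card_UN_le)
  also have "\<dots> = (\<Sum>w\<in>C. card C * card (P \<inter> cball w r))"
    by (simp add: sum_distrib_left)
  also have "\<dots> < (\<Sum>w\<in>C. card P)" if "C \<noteq> {}"
    using that assms(2) less by (intro sum_strict_mono) auto
  finally show False
    using less[of undefined] assms(3) by (cases "C = {}") auto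
qed

lemma point_family_cball_card_ge:
  assumes "P \<in> point_family n"
  shows "\<exists>w. nat \<lceil>real n / 7\<rceil> \<le> card (P \<inter> cball w (1/4))"
proof -
  have P: "finite P" "card P = n" "\<forall>p\<in>P. \<forall>q\<in>P. dist p q \<le> 1"
    using assms by (auto simp: point_family_def)
  obtain C where C: "finite C" "card C \<le> 7" "P \<subseteq> (\<Union>w\<in>C. cball w (1/4))"
    using cover_by_seven_discs[OF P(1,3)] by blast
  then obtain w where "n \<le> card C * card (P \<inter> cball w (1/4))"
    using exists_cball_card_ge[OF P(1)] P(2) by blast
  also have "\<dots> \<le> 7 * card (P \<inter> cball w (1/4))"
    using C(2) by simp
  finally have "real n / 7 \<le> real (card (P \<inter> cball w (1/4)))"
    by linarith
  then show ?thesis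
    by auto
qed

lemma exists_point_family_subset:
  fixes Q :: "(real^2) set"
  assumes "finite Q" "n \<le> card Q" "\<forall>p\<in>Q. \<forall>q\<in>Q. dist p q \<le> 1"
    and "\<forall>c. card (Q \<inter> cball c r) \<le> K"
  shows "\<exists>P\<in>point_family n. \<forall>c. card (P \<inter> cball c r) \<le> K"
proof -
  obtain P where P: "P \<subseteq> Q" "card P = n" "finite P"
    using obtain_subset_with_card_n[OF assms(2)] by blast
  have "card (P \<inter> cball c r) \<le> card (Q \<inter> cball c r)" for c
    using assms(1) P(1) by (intro card_mono) auto
  then have "card (P \<inter> cball c r) \<le> K" for c
    using assms(4) le_trans by blast
  moreover have "P \<in> point_family n"
    using P assms(3) by (auto simp: point_family_def)
  ultimately show ?thesis
    by blast
qed

lemma N_cover_bounds: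
  assumes lower: "\<forall>P\<in>point_family n. \<exists>c. K \<le> card (P \<inter> cball c r)"
    and upper: "\<exists>P\<in>point_family n. \<forall>c. card (P \<inter> cball c r) \<le> K'"
  shows "K \<le> N_cover n r" "N_cover n r \<le> K'"
proof -
  define A where "A = (\<lambda>k. \<forall>P\<in>point_family n. \<exists>c. k \<le> card (P \<inter> cball c r))"
  have bounded: "k \<le> K'" if "A k" for k
    using that upper unfolding A_def by (meson order_trans)
  have "N_cover n r = Greatest A"
    by (simp add: N_cover_def A_def)
  then show "K \<le> N_cover n r" "N_cover n r \<le> K'"
    using Greatest_le_nat[of A K K'] GreatestI_nat[of A K K'] lower bounded
    by (auto simp: A_def)
qed

lemma sparse_point_family_ring:
  assumes "n \<le> 6"
  shows "\<exists>P\<in>point_family n. \<forall>c. card (P \<inter> cball c (1/4)) \<le> 1"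
  using assms ring_points_diameter[of 1] card_ring_points[of 1] card_ring_points_inter_cball[of 1]
  by (intro exists_point_family_subset[where Q = "ring_points 1"]) (auto simp: ring_points_def)

lemma sparse_point_family_config:
  assumes "2 \<le> m" "n \<le> 7*m"
  shows "\<exists>P\<in>point_family n. \<forall>c. card (P \<inter> cball c (1/4)) \<le> m"
  using assms config_diameter card_config card_config_inter_cball finite_config
  by (intro exists_point_family_subset[where Q = "config m"]) auto

lemma ceiling_div_7_bounds:
  "n \<le> 7 * nat \<lceil>real n / 7\<rceil>" "7 * nat \<lceil>real n / 7\<rceil> < n + 7"
  using real_nat_ceiling_ge[of "real n / 7"] ceiling_correct[of "real n / 7"] by linarith+

theorem theorem5:
  shows "(\<forall>n::nat. 0 < n \<and> n \<noteq> 7 \<longrightarrow> N_cover n (1/4) = nat \<lceil>real n / 7\<rceil>)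
         \<and> 1 \<le> N_cover 7 (1/4) \<and> N_cover 7 (1/4) \<le> 2"
proof (intro conjI allI impI)
  fix n :: nat
  assume n: "0 < n \<and> n \<noteq> 7"
  define k where "k = nat \<lceil>real n / 7\<rceil>"
  note k = ceiling_div_7_bounds[of n, folded k_def]
  have "\<exists>P\<in>point_family n. \<forall>c. card (P \<inter> cball c (1/4)) \<le> k"
  proof (cases "n \<le> 6")
    case True
    with k n have "k = 1" by linarith
    with sparse_point_family_ring[OF True] show ?thesis by simp
  next
    case False
    with k n show ?thesis by (intro sparse_point_family_config) linarith+
  qed
  from N_cover_bounds[OF _ this] point_family_cball_card_ge
  show "N_cover n (1/4) = nat \<lceil>real n / 7\<rceil>"
    unfolding k_def by (meson le_antisym)
next
  from N_cover_bounds[OF _ sparse_point_family_config[of 2 7]] point_family_cball_card_ge[of _ 7]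
  show "1 \<le> N_cover 7 (1/4)" "N_cover 7 (1/4) \<le> 2"
    by auto
qed

end
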